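(* Let $\mathbf u$ be an aperiodic infinite word over a finite alphabet whose language is closed under reversal. Then the following are equivalent: (1) there exists $H\in\mathbb N$ such that for every prefix $w$ of $\mathbf u$ with $|w|\ge H$, the longest palindromic suffix of $w$ occurs in $w$ exactly once; (2) there exists $N\in\mathbb N$ such that for every factor $w$ of $\mathbf u$ with $|w|\ge N$, every factor $v$ of $\mathbf u$ with $|v|>|w|$ which begins with $w$ or $\overline w$, ends with $w$ or $\overline w$, and contains no other occurrences of $w$ or $\overline w$ (i.e. $w,\overline w$ occur in $v$ only as its prefix and as its suffix), is a palindrome.
   Context: An infinite word is aperiodic if it is not eventually periodic. For a finite word $w=w_0\cdots w_{n-1}$ its reversal is $\overline{w}=w_{n-1}\cdots w_0$; $w$ is a palindrome if $w=\overline{w}$ (the empty word is a palindrome). The language of $\mathbf u$ is closed under reversal if the reversal of every factor of $\mathbf u$ is again a factor of $\mathbf u$. *)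

theory Defs
  imports Main "HOL-Library.Sublist"
begin

definition aperiodic :: "(nat \<Rightarrow> 'a) \<Rightarrow> bool" where
  "aperiodic u \<longleftrightarrow> \<not> (\<exists>p>0. \<exists>n0. \<forall>n\<ge>n0. u (n + p) = u n)"

definition factor_of :: "'a list \<Rightarrow> (nat \<Rightarrow> 'a) \<Rightarrow> bool" where
  "factor_of w u \<longleftrightarrow> (\<exists>i. w = map u [i..<i + length w])"

definition prefix_of :: "'a list \<Rightarrow> (nat \<Rightarrow> 'a) \<Rightarrow> bool" where
  "prefix_of w u \<longleftrightarrow> w = map u [0..<length w]"

definition closed_under_reversal :: "(nat \<Rightarrow> 'a) \<Rightarrow> bool" where
  "closed_under_reversal u \<longleftrightarrow> (\<forall>w. factor_of w u \<longrightarrow> factor_of (rev w) u)"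

definition palindrome :: "'a list \<Rightarrow> bool" where
  "palindrome w \<longleftrightarrow> rev w = w"

definition occurrences :: "'a list \<Rightarrow> 'a list \<Rightarrow> nat set" where
  "occurrences s w = {i. i + length s \<le> length w \<and> take (length s) (drop i w) = s}"

definition longest_pal_suffix :: "'a list \<Rightarrow> 'a list" where
  "longest_pal_suffix w = (THE s. suffix s w \<and> palindrome s \<and>
      (\<forall>t. suffix t w \<and> palindrome t \<longrightarrow> length t \<le> length s))"

end

theory Submission
  imports Defs
begin

text \<open>If \<open>v\<close> is a complete return word to
  \<open>{w, rev w}\<close> whose longest palindromic suffix \<open>P\<close> occurs only once, then \<open>P\<close> cannot be shorter
  than \<open>w\<close> (it would reoccur inside the prefix \<open>w\<close> or \<open>rev w\<close>), and if it is longer it begins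
  with the reversal of the final \<open>w\<close>, which is only possible when \<open>P = v\<close>. For (1) \<open>\<Rightarrow>\<close> (2)
  one transports the hypothesis on prefixes to factors: either the longest palindromic suffix of
  the prefix ending with the factor is contained in the factor, or it reflects the factor to an
  earlier position. For (2) \<open>\<Rightarrow>\<close> (1), over a finite alphabet every word of length \<open>N\<close> reoccurs
  near the start, and the last earlier occurrence of a suffix \<open>w\<close> or \<open>rev w\<close> cuts off a complete
  return word, i.e. a palindromic suffix longer than \<open>w\<close>; hence long longest palindromic suffixes
  are unioccurrent.\<close>

lemma suffix_iff_drop: "suffix s x \<longleftrightarrow> length s \<le> length x \<and> s = drop (length x - length s) x"
proof
  assume "suffix s x"
  then show "length s \<le> length x \<and> s = drop (length x - length s) x"
    by (auto simp: suffix_def)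
next
  assume "length s \<le> length x \<and> s = drop (length x - length s) x"
  then show "suffix s x"
    by (metis suffix_drop)
qed

lemma prefix_iff_take: "prefix s x \<longleftrightarrow> s = take (length s) x"
proof
  assume "s = take (length s) x"
  then show "prefix s x"
    by (metis take_is_prefix)
qed (auto simp: prefix_def)

lemma suffix_same_length_eq: "suffix s x \<Longrightarrow> suffix t x \<Longrightarrow> length s = length t \<Longrightarrow> s = t"
  by (simp add: suffix_iff_drop)

lemma prefix_rev_if_suffix_palindrome: "suffix e P \<Longrightarrow> palindrome P \<Longrightarrow> prefix (rev e) P"
  by (simp add: palindrome_def suffix_to_prefix)

lemma longest_pal_suffix_spec:
  "suffix (longest_pal_suffix x) x \<and> palindrome (longest_pal_suffix x)
   \<and> (\<forall>t. suffix t x \<and> palindrome t \<longrightarrow> length t \<le> length (longest_pal_suffix x))"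
proof -
  let ?longest = "\<lambda>s. suffix s x \<and> palindrome s
                       \<and> (\<forall>t. suffix t x \<and> palindrome t \<longrightarrow> length t \<le> length s)"
  have "suffix [] x \<and> palindrome []"
    by (simp add: palindrome_def)
  moreover have "\<forall>y. suffix y x \<and> palindrome y \<longrightarrow> length y < Suc (length x)"
    by (auto dest: suffix_length_le)
  ultimately obtain s where s: "?longest s"
    using Lattices_Big.ex_has_greatest_nat[of "\<lambda>s. suffix s x \<and> palindrome s"] by blast
  have unique: "y = s" if "?longest y" for y
  proof -
    have "length y = length s"
      using that s order_antisym by blast
    then show ?thesis
      using that s suffix_same_length_eq by blast
  qed
  have "\<exists>!s. ?longest s"
    using s unique by (rule ex1I)
  from theI'[OF this] show ?thesis
    unfolding longest_pal_suffix_def .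
qed

lemma suffix_longest_pal_suffix: "suffix (longest_pal_suffix x) x"
  and palindrome_longest_pal_suffix: "palindrome (longest_pal_suffix x)"
  and longest_pal_suffix_maximal:
    "suffix t x \<Longrightarrow> palindrome t \<Longrightarrow> length t \<le> length (longest_pal_suffix x)"
  using longest_pal_suffix_spec by blast+

lemma longest_pal_suffix_eqI:
  assumes "suffix s x" "palindrome s"
    and "\<And>t. suffix t x \<Longrightarrow> palindrome t \<Longrightarrow> length t \<le> length s"
  shows "longest_pal_suffix x = s"
proof -
  have "length (longest_pal_suffix x) = length s"
    using assms longest_pal_suffix_maximal suffix_longest_pal_suffix palindrome_longest_pal_suffix
    by (meson order_antisym)
  then show ?thesis
    using assms(1) suffix_longest_pal_suffix suffix_same_length_eq by blast
qed

lemma mem_occurrences_iff: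
  "i \<in> occurrences s w \<longleftrightarrow> i + length s \<le> length w \<and> (\<forall>j<length s. w ! (i + j) = s ! j)"
  unfolding occurrences_def by (auto simp: list_eq_iff_nth_eq)

lemma occurrence_if_suffix: "suffix s w \<Longrightarrow> length w - length s \<in> occurrences s w"
  by (auto simp: suffix_def occurrences_def)

lemma occurrence_if_prefix: "prefix s w \<Longrightarrow> 0 \<in> occurrences s w"
  by (auto simp: prefix_def occurrences_def)

lemma occurrence_drop: "j \<in> occurrences s (drop k w) \<Longrightarrow> k \<le> length w \<Longrightarrow> k + j \<in> occurrences s w"
  unfolding mem_occurrences_iff by (auto simp: add.assoc)

lemma occurrence_prefix: "prefix e x \<Longrightarrow> i \<in> occurrences s e \<Longrightarrow> i \<in> occurrences s x"
  unfolding mem_occurrences_iff by (auto simp: prefix_def nth_append)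

lemma occurrence_rev:
  assumes "i \<in> occurrences s (rev x)"
  shows "length x - length s - i \<in> occurrences (rev s) x"
  unfolding mem_occurrences_iff
proof (intro conjI allI impI)
  from assms have i: "i + length s \<le> length x" and s: "\<And>j. j < length s \<Longrightarrow> rev x ! (i + j) = s ! j"
    unfolding mem_occurrences_iff by auto
  show "length x - length s - i + length (rev s) \<le> length x"
    using i by simp
  fix j assume "j < length (rev s)"
  with i s[of "length s - 1 - j"] show "x ! (length x - length s - i + j) = rev s ! j"
    by (simp add: rev_nth add.commute)
qed

lemma occurrence_of_reversed_suffix:
  assumes "suffix Q p" "palindrome Q" "suffix x p" "length x \<le> length Q"
  shows "length p - length Q \<in> occurrences (rev x) p"
proof -
  have "prefix (rev x) Q"
    using assms by (meson prefix_rev_if_suffix_palindrome suffix_length_suffix)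
  then have "0 \<in> occurrences (rev x) (drop (length p - length Q) p)"
    using assms(1) occurrence_if_prefix suffix_iff_drop by metis
  then show ?thesis
    using occurrence_drop by fastforce
qed

lemma card_occurrences_eq_1_iff:
  assumes "suffix s x"
  shows "card (occurrences s x) = 1 \<longleftrightarrow> (\<forall>i\<in>occurrences s x. i = length x - length s)"
  using occurrence_if_suffix[OF assms] by (auto simp: card_1_singleton_iff)

subsection \<open>Complete return words\<close>

definition complete_return :: "'a list \<Rightarrow> 'a list \<Rightarrow> bool" where
  "complete_return w v \<longleftrightarrow> length v > length w
     \<and> (prefix w v \<or> prefix (rev w) v) \<and> (suffix w v \<or> suffix (rev w) v)
     \<and> occurrences w v \<union> occurrences (rev w) v \<subseteq> {0, length v - length w}"

lemma complete_return_rev: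
  assumes "complete_return w v"
  shows "complete_return w (rev v)"
proof -
  have len: "length w < length v"
    and ends: "prefix w v \<or> prefix (rev w) v" "suffix w v \<or> suffix (rev w) v"
    and occ: "occurrences w v \<union> occurrences (rev w) v \<subseteq> {0, length v - length w}"
    using assms unfolding complete_return_def by auto
  have "occurrences s (rev v) \<subseteq> {0, length v - length w}" if s: "s \<in> {w, rev w}" for s
  proof
    fix i assume i: "i \<in> occurrences s (rev v)"
    have "occurrences (rev s) v \<subseteq> {0, length v - length w}"
      using occ s by auto
    then have "length v - length s - i \<in> {0, length v - length w}"
      using occurrence_rev[OF i] by blast
    moreover have "i + length s \<le> length v" "length s = length w"
      using i s unfolding occurrences_def by auto
    ultimately show "i \<in> {0, length v - length w}" by auto
  qed
  moreover have "prefix w (rev v) \<or> prefix (rev w) (rev v)" "suffix w (rev v) \<or> suffix (rev w) (rev v)"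
    using ends by (auto simp: suffix_to_prefix)
  ultimately show ?thesis
    using len unfolding complete_return_def by simp
qed

lemma length_le_longest_pal_suffix_if_complete_return:
  assumes "complete_return w x" and "card (occurrences (longest_pal_suffix x) x) = 1"
  shows "length w \<le> length (longest_pal_suffix x)"
proof (rule ccontr)
  define P where "P = longest_pal_suffix x"
  assume "\<not> length w \<le> length (longest_pal_suffix x)"
  then have short: "length P < length w" unfolding P_def by simp
  have unique: "i = length x - length P" if "i \<in> occurrences P x" for i
    using assms(2) card_occurrences_eq_1_iff[OF suffix_longest_pal_suffix] that unfolding P_def
    by blast
  have len: "length w < length x"
    using assms(1) unfolding complete_return_def by simp
  obtain b e where b: "b \<in> {w, rev w}" "prefix b x" and e: "e \<in> {w, rev w}" "suffix e x"
    using assms(1) unfolding complete_return_def by auto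
  have "length P \<le> length e" using short e(1) by auto
  then have "suffix P e"
    using suffix_length_suffix[OF suffix_longest_pal_suffix e(2)] unfolding P_def by simp
  show False
  proof (cases "b = e")
    case True
    have "length e - length P \<in> occurrences P x"
      using occurrence_if_suffix[OF \<open>suffix P e\<close>] occurrence_prefix b(2) True by blast
    then show False
      using unique len short e(1) by fastforce
  next
    case False
    then have "b = rev e" using b e by auto
    moreover have "prefix (rev P) (rev e)"
      using \<open>suffix P e\<close> by (simp add: suffix_to_prefix)
    ultimately have "prefix P x"
      using b(2) palindrome_longest_pal_suffix[of x] unfolding P_def palindrome_def
      by (metis prefix_order.trans)
    then show False
      using unique occurrence_if_prefix len short by fastforce
  qed
qed

lemma palindrome_if_complete_return:
  assumes "complete_return w x" and "card (occurrences (longest_pal_suffix x) x) = 1"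
  shows "palindrome x"
proof -
  define P where "P = longest_pal_suffix x"
  have P: "suffix P x" "palindrome P"
    unfolding P_def by (rule suffix_longest_pal_suffix palindrome_longest_pal_suffix)+
  have unique: "i = length x - length P" if "i \<in> occurrences P x" for i
    using assms(2) card_occurrences_eq_1_iff[OF P(1)] that unfolding P_def by blast
  have len: "length w < length x"
    and occ: "occurrences w x \<union> occurrences (rev w) x \<subseteq> {0, length x - length w}"
    using assms(1) unfolding complete_return_def by auto
  obtain b e where b: "b \<in> {w, rev w}" "prefix b x" and e: "e \<in> {w, rev w}" "suffix e x"
    using assms(1) unfolding complete_return_def by auto
  have long: "length w \<le> length P"
    using length_le_longest_pal_suffix_if_complete_return[OF assms] unfolding P_def .
  have "length P \<le> length x"
    using P(1) by (rule suffix_length_le)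
  \<comment> \<open>the reversal of the final \<open>e\<close> begins \<open>P\<close>, so \<open>P\<close> starts at \<open>0\<close> or at the final \<open>e\<close>\<close>
  have "length x - length P \<in> occurrences (rev e) x"
    using occurrence_of_reversed_suffix[OF P e(2)] e(1) long by auto
  then have "length x - length P \<in> {0, length x - length w}"
    using occ e(1) by auto
  then show ?thesis
  proof
    assume "length x - length P = 0"
    then have "P = x"
      using P(1) \<open>length P \<le> length x\<close> suffix_same_length_eq[OF P(1), of x] by simp
    then show ?thesis using P(2) by simp
  next
    assume "length x - length P \<in> {length x - length w}"
    then have "length P = length e"
      using \<open>length P \<le> length x\<close> len e(1) by auto
    then have "P = e"
      using P(1) e(2) suffix_same_length_eq by blast
    then have "b = e" using b e P(2) unfolding palindrome_def by auto
    then have "0 = length x - length P"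
      using unique occurrence_if_prefix b(2) \<open>P = e\<close> by blast
    then show ?thesis
      using \<open>length P = length e\<close> e(1) len by auto
  qed
qed

subsection \<open>From prefixes to factors\<close>

lemma occurrences_prefix_of_iff:
  assumes "prefix_of p u"
  shows "j \<in> occurrences s p \<longleftrightarrow> j + length s \<le> length p \<and> s = map u [j..<j + length s]"
proof -
  have p: "p = map u [0..<length p]"
    using assms unfolding prefix_of_def .
  have "take (length s) (drop j p) = map u [j..<j + length s]" if "j + length s \<le> length p"
    using that by (subst p) (simp add: drop_map take_map)
  then show ?thesis
    unfolding occurrences_def by auto
qed

lemma factor_of_drop:
  assumes "prefix_of p u"
  shows "factor_of (drop k p) u"
proof (cases "k \<le> length p")
  case True
  have p: "p = map u [0..<length p]"
    using assms unfolding prefix_of_def .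
  have "drop k p = map u [k..<length p]"
    by (subst p) (simp add: drop_map)
  with True show ?thesis
    unfolding factor_of_def by (intro exI[of _ k]) simp
next
  case False
  then show ?thesis
    unfolding factor_of_def by (intro exI[of _ k]) simp
qed

lemma unique_longest_pal_suffix_of_suffix:
  assumes unique: "card (occurrences (longest_pal_suffix (y @ x)) (y @ x)) = 1"
    and short: "length (longest_pal_suffix (y @ x)) \<le> length x"
  shows "card (occurrences (longest_pal_suffix x) x) = 1"
proof -
  define Q where "Q = longest_pal_suffix (y @ x)"
  have Qx: "suffix Q x"
    using suffix_length_suffix[OF suffix_longest_pal_suffix suffix_appendI[OF suffix_order.refl] short]
    unfolding Q_def .
  have "longest_pal_suffix x = Q"
  proof (rule longest_pal_suffix_eqI[OF Qx])
    show "palindrome Q"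
      unfolding Q_def by (rule palindrome_longest_pal_suffix)
    fix t assume "suffix t x" "palindrome t"
    then show "length t \<le> length Q"
      unfolding Q_def by (simp add: longest_pal_suffix_maximal suffix_appendI)
  qed
  moreover have "j = length x - length Q" if "j \<in> occurrences Q x" for j
  proof -
    have "length y + j \<in> occurrences Q (y @ x)"
      using occurrence_drop[of j Q "length y" "y @ x"] that by simp
    then have "length y + j = length (y @ x) - length Q"
      using unique card_occurrences_eq_1_iff[OF suffix_longest_pal_suffix[of "y @ x"]]
      unfolding Q_def by blast
    then show ?thesis
      using short unfolding Q_def by simp
  qed
  ultimately show ?thesis
    using card_occurrences_eq_1_iff[OF Qx] by simp
qed

lemma palindrome_if_unioccurrent_prefixes:
  assumes H: "\<forall>p. prefix_of p u \<and> H \<le> length p \<longrightarrow> card (occurrences (longest_pal_suffix p) p) = 1"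
    and P_rev: "\<And>x. P x \<Longrightarrow> P (rev x)"
    and P_pal: "\<And>x. P x \<Longrightarrow> card (occurrences (longest_pal_suffix x) x) = 1 \<Longrightarrow> palindrome x"
    and "P v" "factor_of v u" "H \<le> length v"
  shows "palindrome v"
proof -
  have "palindrome x" if "P x" "H \<le> length x" "x = map u [i..<i + length x]" for i x
    using that
  proof (induction i arbitrary: x rule: less_induct)
    case (less i)
    define p where "p = map u [0..<i + length x]"
    define Q where "Q = longest_pal_suffix p"
    have p: "p = map u [0..<i] @ x"
      unfolding p_def by (subst less.prems(3)) (simp add: upt_add_eq_append[of 0 i])
    have "prefix_of p u"
      unfolding p_def prefix_of_def by simp
    moreover have unique: "card (occurrences Q p) = 1"
      using H \<open>prefix_of p u\<close> less.prems(2) unfolding p_def Q_def by simp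
    show ?case
    proof (cases "length Q \<le> length x")
      case True
      then show ?thesis
        using unique_longest_pal_suffix_of_suffix P_pal less.prems(1) unique
        unfolding p Q_def by blast
    next
      case False
      \<comment> \<open>\<open>Q\<close> reflects \<open>x\<close> to the earlier position \<open>length p - length Q\<close>\<close>
      have "suffix x p"
        unfolding p by (rule suffix_appendI[OF suffix_order.refl])
      then have "length p - length Q \<in> occurrences (rev x) p"
        using occurrence_of_reversed_suffix[OF suffix_longest_pal_suffix palindrome_longest_pal_suffix]
          False unfolding Q_def by fastforce
      then have "rev x = map u [length p - length Q..<length p - length Q + length (rev x)]"
        using occurrences_prefix_of_iff[OF \<open>prefix_of p u\<close>] by simp
      moreover have "length p - length Q < i"
        using False suffix_length_le[OF suffix_longest_pal_suffix, of p]
        unfolding p Q_def by auto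
      ultimately have "palindrome (rev x)"
        using less.IH[of "length p - length Q" "rev x"] P_rev[OF less.prems(1)] less.prems(2)
        by simp
      then show ?thesis
        by (simp add: palindrome_def)
    qed
  qed
  then show ?thesis
    using assms(4-6) unfolding factor_of_def by blast
qed

subsection \<open>From complete return words to prefixes\<close>

lemma complete_return_suffix_exists:
  assumes "suffix w p" "j \<in> occurrences w p" "j < length p - length w"
  shows "\<exists>k. complete_return w (drop k p)"
proof -
  define S where "S = {i. i < length p - length w \<and> (i \<in> occurrences w p \<or> i \<in> occurrences (rev w) p)}"
  define k where "k = Max S"
  have "finite S" "j \<in> S"
    using assms unfolding S_def by auto
  then have k: "k \<in> S" "\<And>i. i \<in> S \<Longrightarrow> i \<le> k"
    unfolding k_def using Max_in by auto
  define v where "v = drop k p"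
  have len: "length w < length v" "length v = length p - k"
    using k(1) unfolding S_def v_def by auto
  have "prefix w v \<or> prefix (rev w) v"
    using k(1) unfolding S_def v_def occurrences_def prefix_iff_take by auto
  moreover have "suffix w v"
    using suffix_length_suffix[OF assms(1) suffix_drop] len unfolding v_def by simp
  moreover have "occurrences s v \<subseteq> {0, length v - length w}" if s: "s \<in> {w, rev w}" for s
  proof
    fix i assume i: "i \<in> occurrences s v"
    have "k \<le> length p" using len by simp
    then have "k + i \<in> occurrences s p"
      using occurrence_drop i unfolding v_def by blast
    moreover have "i + length w \<le> length v"
      using i s unfolding occurrences_def by auto
    ultimately have "k + i < length p - length w \<Longrightarrow> k + i \<in> S"
      using s unfolding S_def by auto
    then show "i \<in> {0, length v - length w}"
      using k(2)[of "k + i"] \<open>i + length w \<le> length v\<close> len by fastforce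
  qed
  ultimately show ?thesis
    using len unfolding complete_return_def v_def by blast
qed

lemma longer_palindromic_suffix:
  assumes R: "\<forall>w v. factor_of w u \<and> N \<le> length w \<and> factor_of v u \<and> complete_return w v
                \<longrightarrow> palindrome v"
    and p: "prefix_of p u" and w: "suffix w p" "N \<le> length w"
    and j: "j \<in> occurrences w p" "j < length p - length w"
  shows "length w < length (longest_pal_suffix p)"
proof -
  obtain k where k: "complete_return w (drop k p)"
    using complete_return_suffix_exists[OF w(1) j] by blast
  have "w = drop (length p - length w) p"
    using w(1) suffix_iff_drop by blast
  then have "factor_of w u"
    using factor_of_drop[OF p] by metis
  then have "palindrome (drop k p)"
    using R factor_of_drop[OF p] w(2) k by blast
  then have "length (drop k p) \<le> length (longest_pal_suffix p)"
    using longest_pal_suffix_maximal[OF suffix_drop] by blast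
  moreover have "length w < length (drop k p)"
    using k unfolding complete_return_def by simp
  ultimately show ?thesis by simp
qed

lemma early_occurrences:
  assumes "finite (range u)"
  shows "\<exists>M. \<forall>i. \<exists>j\<le>M. map u [j..<j + n] = map u [i..<i + n]"
proof -
  define first where "first i = (LEAST j. map u [j..<j + n] = map u [i..<i + n])" for i
  have "range (\<lambda>i. map u [i..<i + n]) \<subseteq> {xs. set xs \<subseteq> range u \<and> length xs = n}"
    by auto
  then have "finite (range (\<lambda>i. map u [i..<i + n]))"
    using finite_lists_length_eq[OF assms] finite_subset by blast
  moreover have "range first \<subseteq> (\<lambda>x. LEAST j. map u [j..<j + n] = x) ` range (\<lambda>i. map u [i..<i + n])"
    unfolding first_def by auto
  ultimately have "finite (range first)"
    using finite_subset by blast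
  moreover have "map u [first i..<first i + n] = map u [i..<i + n]" for i
    unfolding first_def by (rule LeastI[of _ i]) simp
  ultimately show ?thesis
    by (metis Max_ge rangeI)
qed

lemma unioccurrent_if_complete_returns_palindromic:
  assumes "finite (range u)"
    and R: "\<forall>w v. factor_of w u \<and> N \<le> length w \<and> factor_of v u \<and> complete_return w v
                \<longrightarrow> palindrome v"
  shows "\<exists>H. \<forall>p. prefix_of p u \<and> H \<le> length p \<longrightarrow> card (occurrences (longest_pal_suffix p) p) = 1"
proof -
  obtain M where M: "\<And>i. \<exists>j\<le>M. map u [j..<j + N] = map u [i..<i + N]"
    using early_occurrences[OF assms(1)] by blast
  have "card (occurrences (longest_pal_suffix p) p) = 1"
    if p: "prefix_of p u" "Suc (M + N) \<le> length p" for p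
  proof -
    define Q where "Q = longest_pal_suffix p"
    define w where "w = drop (length p - N) p"
    have w: "suffix w p" "length w = N"
      using p(2) unfolding w_def by (simp_all add: suffix_drop)
    have "w = map u [length p - N..<length p - N + N]"
      using occurrence_if_suffix[OF w(1)] occurrences_prefix_of_iff[OF p(1)] w(2) by simp
    then obtain j where "j \<le> M" "map u [j..<j + N] = w"
      using M[of "length p - N"] by auto
    then have "j \<in> occurrences w p" "j < length p - length w"
      using occurrences_prefix_of_iff[OF p(1)] p(2) w(2) by auto
    then have "N < length Q"
      using longer_palindromic_suffix[OF R p(1) w(1)] w(2) unfolding Q_def by simp
    have "i = length p - length Q" if i: "i \<in> occurrences Q p" for i
    proof (rule ccontr)
      assume "i \<noteq> length p - length Q"
      then have "i < length p - length Q"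
        using i unfolding occurrences_def by auto
      then have "length Q < length Q"
        using longer_palindromic_suffix[OF R p(1) suffix_longest_pal_suffix] i \<open>N < length Q\<close>
        unfolding Q_def by simp
      then show False by simp
    qed
    then show ?thesis
      using card_occurrences_eq_1_iff[OF suffix_longest_pal_suffix] unfolding Q_def by blast
  qed
  then show ?thesis by blast
qed

theorem lemma14:
  fixes u :: "nat \<Rightarrow> 'a"
  assumes "finite (range u)"
    and "aperiodic u"
    and "closed_under_reversal u"
  shows "(\<exists>H::nat. \<forall>w. prefix_of w u \<and> length w \<ge> H \<longrightarrow>
             card (occurrences (longest_pal_suffix w) w) = 1)
     \<longleftrightarrow>
         (\<exists>N::nat. \<forall>w v. factor_of w u \<and> length w \<ge> N \<and> factor_of v u \<and> length v > length w
             \<and> (prefix w v \<or> prefix (rev w) v) \<and> (suffix w v \<or> suffix (rev w) v)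
             \<and> occurrences w v \<union> occurrences (rev w) v \<subseteq> {0, length v - length w}
             \<longrightarrow> palindrome v)"
  unfolding complete_return_def[symmetric]
proof
  assume "\<exists>H. \<forall>p. prefix_of p u \<and> H \<le> length p \<longrightarrow> card (occurrences (longest_pal_suffix p) p) = 1"
  then obtain H
    where H: "\<forall>p. prefix_of p u \<and> H \<le> length p \<longrightarrow> card (occurrences (longest_pal_suffix p) p) = 1"
    by blast
  have "palindrome v" if "factor_of v u" "H \<le> length w" "complete_return w v" for w v
  proof (rule palindrome_if_unioccurrent_prefixes[OF H, of "complete_return w"])
    show "H \<le> length v"
      using that unfolding complete_return_def by simp
  qed (fact complete_return_rev palindrome_if_complete_return that(1,3))+
  then show "\<exists>N. \<forall>w v. factor_of w u \<and> N \<le> length w \<and> factor_of v u \<and> complete_return w v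
               \<longrightarrow> palindrome v"
    by blast
next
  assume "\<exists>N. \<forall>w v. factor_of w u \<and> N \<le> length w \<and> factor_of v u \<and> complete_return w v
            \<longrightarrow> palindrome v"
  then show "\<exists>H. \<forall>p. prefix_of p u \<and> H \<le> length p \<longrightarrow> card (occurrences (longest_pal_suffix p) p) = 1"
    using unioccurrent_if_complete_returns_palindromic[OF assms(1)] by blast
qed

end
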